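(* Let $G=(g_1,\dots,g_k)\in\mathbb{N}_0^k$ be telescopic with $g_1>0$ and $c(G)=(c_2,\dots,c_k)$. Suppose that for some $n\in\{1,\dots,k\}$, $g_n$ is an $\mathbb{N}_0$-linear combination of the entries $g_i$, $i\ne n$. Then either $g_n\in\langle g_1,\dots,g_{n-1}\rangle$ (interpreted as $\{0\}$ when $n=1$), or $g_n=c_mg_m$ for some $m$ with $n<m\le k$.
   Context: For $G=(g_1,\dots,g_k)\in\mathbb{N}_0^k$, $\langle\cdot\rangle$ denotes the set of $\mathbb{N}_0$-linear combinations. Let $G_i=(g_1,\dots,g_i)$, $d_i=\gcd(G_i)$, and (assuming $g_1>0$) $c(G)=(c_2,\dots,c_k)$ with $c_j=d_{j-1}/d_j$. $G$ is telescopic if $c_jg_j\in\langle G_{j-1}\rangle$ for all $2\le j\le k$. *)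

theory Defs
  imports Main
begin

text \<open>A tuple G = (g_1,...,g_k) is modelled by a function g :: nat => nat
  together with the length k; only the values g 1, ..., g k matter.\<close>

definition lincomb :: "nat set \<Rightarrow> (nat \<Rightarrow> nat) \<Rightarrow> nat set" where
  "lincomb I g = {(\<Sum>i\<in>I. a i * g i) | a. True}"

definition dG :: "(nat \<Rightarrow> nat) \<Rightarrow> nat \<Rightarrow> nat" where
  "dG g i = Gcd (g ` {1..i})"

definition cG :: "(nat \<Rightarrow> nat) \<Rightarrow> nat \<Rightarrow> nat" where
  "cG g j = dG g (j - 1) div dG g j"

definition telescopic :: "(nat \<Rightarrow> nat) \<Rightarrow> nat \<Rightarrow> bool" where
  "telescopic g k \<longleftrightarrow> (\<forall>j\<in>{2..k}. cG g j * g j \<in> lincomb {1..j-1} g)"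

end

theory Submission
  imports Defs
begin

text \<open>Write g_n as a combination of the other entries and induct on the largest index M + 1 that
  may occur, say with coefficient x > 0. Every entry and every term of index at most M other than n
  is divisible by d_M, so d_M divides x g_{M+1}; since d_M / d_{M+1} and g_{M+1} / d_{M+1} are
  coprime, c_{M+1} divides x. Telescopy writes c_{M+1} g_{M+1} as a combination of g_1, ..., g_M.
  If g_n occurs in it, comparing sizes forces g_n = c_{M+1} g_{M+1}; otherwise substituting it
  removes index M + 1 and the induction continues.\<close>

lemma lincombI: "x = (\<Sum>i\<in>I. a i * g i) \<Longrightarrow> x \<in> lincomb I g"
  unfolding lincomb_def by blast

lemma lincomb_add:
  assumes "x \<in> lincomb I g" and "y \<in> lincomb I g"
  shows "x + y \<in> lincomb I g"
proof -
  obtain a b where "x = (\<Sum>i\<in>I. a i * g i)" and "y = (\<Sum>i\<in>I. b i * g i)"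
    using assms unfolding lincomb_def by auto
  then have "x + y = (\<Sum>i\<in>I. (a i + b i) * g i)"
    by (simp add: sum.distrib distrib_right)
  then show ?thesis by (rule lincombI)
qed

lemma lincomb_mult:
  assumes "x \<in> lincomb I g"
  shows "c * x \<in> lincomb I g"
proof -
  obtain a where "x = (\<Sum>i\<in>I. a i * g i)"
    using assms unfolding lincomb_def by auto
  then have "c * x = (\<Sum>i\<in>I. (c * a i) * g i)"
    by (simp add: sum_distrib_left mult.assoc)
  then show ?thesis by (rule lincombI)
qed

lemma lincomb_dvd:
  assumes "\<And>i. i \<in> I \<Longrightarrow> d dvd g i" and "x \<in> lincomb I g"
  shows "d dvd x"
  using assms unfolding lincomb_def by (auto intro!: dvd_sum dvd_mult)

lemma lincomb_insert:
  assumes "finite I" and "j \<notin> I"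
  shows "x \<in> lincomb (insert j I) g \<longleftrightarrow> (\<exists>c y. y \<in> lincomb I g \<and> x = c * g j + y)"
proof
  assume "x \<in> lincomb (insert j I) g"
  then obtain a where "x = (\<Sum>i\<in>insert j I. a i * g i)"
    unfolding lincomb_def by auto
  then have "x = a j * g j + (\<Sum>i\<in>I. a i * g i)"
    using assms by simp
  then show "\<exists>c y. y \<in> lincomb I g \<and> x = c * g j + y"
    unfolding lincomb_def by blast
next
  assume "\<exists>c y. y \<in> lincomb I g \<and> x = c * g j + y"
  then obtain c a where x: "x = c * g j + (\<Sum>i\<in>I. a i * g i)"
    unfolding lincomb_def by auto
  have "(\<Sum>i\<in>I. (a(j := c)) i * g i) = (\<Sum>i\<in>I. a i * g i)"
    using assms(2) by (intro sum.cong) auto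
  then have "x = (\<Sum>i\<in>insert j I. (a(j := c)) i * g i)"
    using assms x by simp
  then show "x \<in> lincomb (insert j I) g"
    by (rule lincombI)
qed

lemma div_gcd_dvd_of_dvd_mult:
  fixes d h x :: nat
  assumes "gcd h d \<noteq> 0" and "d dvd x * h"
  shows "d div gcd h d dvd x"
proof -
  define e where "e = gcd h d"
  obtain d' h' where d: "d = e * d'" and h: "h = e * h'"
    unfolding e_def by (meson dvdE gcd_dvd1 gcd_dvd2)
  have "e \<noteq> 0" using assms(1) e_def by simp
  have "e * gcd h' d' = gcd (e * h') (e * d')"
    by (simp add: gcd_mult_distrib_nat)
  also have "\<dots> = e"
    by (metis d h e_def)
  finally have "coprime d' h'"
    using \<open>e \<noteq> 0\<close> by (simp add: coprime_iff_gcd_eq_1 gcd.commute)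
  moreover have "d' dvd x * h'"
    using assms(2) \<open>e \<noteq> 0\<close> unfolding d h by (simp add: mult.left_commute)
  ultimately have "d' dvd x"
    by (metis coprime_dvd_mult_left_iff)
  moreover have "d div gcd h d = d'"
    using d e_def \<open>e \<noteq> 0\<close> by (metis nonzero_mult_div_cancel_left)
  ultimately show ?thesis by simp
qed

lemma dG_Suc: "dG g (Suc M) = gcd (g (Suc M)) (dG g M)"
proof -
  have "{1..Suc M} = insert (Suc M) {1..M}" by auto
  then show ?thesis unfolding dG_def by simp
qed

lemma dG_dvd: "i \<in> {1..M} \<Longrightarrow> dG g M dvd g i"
  unfolding dG_def by (simp add: Gcd_dvd)

lemma dG_pos:
  assumes "g 1 > 0" and "M \<ge> 1"
  shows "dG g M > 0"
proof -
  have "dG g M dvd g 1" using assms(2) by (simp add: dG_dvd)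
  then show ?thesis using assms(1) by (auto intro: gr0I)
qed

lemma cG_Suc_dvd:
  assumes "dG g (Suc M) \<noteq> 0" and "dG g M dvd x * g (Suc M)"
  shows "cG g (Suc M) dvd x"
  using div_gcd_dvd_of_dvd_mult[of "g (Suc M)" "dG g M" x] assms
  unfolding cG_def by (simp add: dG_Suc)

lemma telescopic_exchange:
  assumes tel: "telescopic g k" and g1: "g 1 > 0"
    and n: "1 \<le> n" "n \<le> M" and Mk: "Suc M \<le> k"
    and gn: "g n = x * g (Suc M) + s" and s: "s \<in> lincomb ({1..M} - {n}) g" and "x \<noteq> 0"
  shows "g n = cG g (Suc M) * g (Suc M) \<or> g n \<in> lincomb ({1..M} - {n}) g"
proof -
  define c where "c = cG g (Suc M)"
  have "dG g M dvd g n"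
    using n by (simp add: dG_dvd)
  moreover have "dG g M dvd s"
    by (rule lincomb_dvd[OF _ s]) (simp add: dG_dvd)
  ultimately have "dG g M dvd x * g (Suc M)"
    using gn by (simp add: dvd_add_left_iff)
  then have "c dvd x"
    using cG_Suc_dvd dG_pos[of g "Suc M"] g1 unfolding c_def by simp
  then obtain q where q: "x = c * q" by (auto elim: dvdE)
  have "Suc M \<in> {2..k}" using n Mk by simp
  then have "c * g (Suc M) \<in> lincomb {1..M} g"
    using tel unfolding telescopic_def c_def by (metis diff_Suc_1)
  moreover have "{1..M} = insert n ({1..M} - {n})" using n by auto
  ultimately obtain b t where t: "t \<in> lincomb ({1..M} - {n}) g" and ct: "c * g (Suc M) = b * g n + t"
    using lincomb_insert[of "{1..M} - {n}" n "c * g (Suc M)" g] by auto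
  show ?thesis
  proof (cases "b = 0")
    case True
    then have "g n = q * t + s" using gn q ct by (simp add: ac_simps)
    then show ?thesis using s t by (simp add: lincomb_add lincomb_mult)
  next
    case False
    have "g n \<le> b * g n" using False by simp
    also have "\<dots> \<le> c * g (Suc M)" using ct by simp
    finally have "g n \<le> c * g (Suc M)" .
    moreover have "c * g (Suc M) \<le> g n"
    proof -
      have "c \<le> x" using \<open>c dvd x\<close> \<open>x \<noteq> 0\<close> by (simp add: dvd_imp_le)
      then have "c * g (Suc M) \<le> x * g (Suc M)" by (rule mult_le_mono1)
      also have "\<dots> \<le> g n" using gn by simp
      finally show ?thesis .
    qed
    ultimately show ?thesis unfolding c_def by simp
  qed
qed

lemma telescopic_lincomb_prefix:
  assumes tel: "telescopic g k" and g1: "g 1 > 0" and n: "1 \<le> n"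
  shows "g n \<in> lincomb ({1..M} - {n}) g \<Longrightarrow> n \<le> M \<Longrightarrow> M \<le> k \<Longrightarrow>
    g n \<in> lincomb {1..n-1} g \<or> (\<exists>m. n < m \<and> m \<le> k \<and> g n = cG g m * g m)"
proof (induction M)
  case 0
  then show ?case using n by simp
next
  case (Suc M)
  show ?case
  proof (cases "Suc M = n")
    case True
    then have "{1..Suc M} - {n} = {1..n-1}" by auto
    then show ?thesis using Suc.prems(1) by simp
  next
    case False
    then have nM: "n \<le> M" and Mk: "M \<le> k" using Suc.prems by auto
    have "{1..Suc M} - {n} = insert (Suc M) ({1..M} - {n})" using False by auto
    then obtain x s where gn: "g n = x * g (Suc M) + s" and s: "s \<in> lincomb ({1..M} - {n}) g"
      using Suc.prems(1) lincomb_insert[of "{1..M} - {n}" "Suc M" "g n" g] by auto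
    show ?thesis
    proof (cases "x = 0")
      case True
      then show ?thesis using gn s Suc.IH nM Mk by simp
    next
      case False
      then have "g n = cG g (Suc M) * g (Suc M) \<or> g n \<in> lincomb ({1..M} - {n}) g"
        using telescopic_exchange[OF tel g1 n nM _ gn s] Suc.prems(3) by simp
      then show ?thesis
      proof
        assume "g n = cG g (Suc M) * g (Suc M)"
        then show ?thesis using nM Suc.prems(3) by (intro disjI2 exI[of _ "Suc M"]) auto
      next
        assume "g n \<in> lincomb ({1..M} - {n}) g"
        then show ?thesis using Suc.IH nM Mk by simp
      qed
    qed
  qed
qed

theorem mainTheorem4:
  fixes g :: "nat \<Rightarrow> nat" and k n :: nat
  assumes "telescopic g k"
    and "g 1 > 0"
    and "n \<in> {1..k}"
    and "g n \<in> lincomb ({1..k} - {n}) g"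
  shows "g n \<in> lincomb {1..n-1} g \<or> (\<exists>m. n < m \<and> m \<le> k \<and> g n = cG g m * g m)"
  using telescopic_lincomb_prefix[OF assms(1,2)] assms(3,4) by auto

end
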